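(* Let $n\ge2$, $\nu\in I^n$ with $\nu_a=\nu_{a+1}$ for some $1\le a<n$, let $M$ be an $R(n)$-module and $f\in\mathbf k[x_1,\dots,x_n]$. If $f\,e(\nu)M=0$, then $$(\partial_af)\,\mathcal P_{\nu_a}(x_a,x_{a+1})\mathcal P_{\nu_a}(x_{a+1},x_a)\,e(\nu)M=0\quad\text{and}\quad(s_af)\,\mathcal P_{\nu_a}(x_a,x_{a+1})\mathcal P_{\nu_a}(x_{a+1},x_a)\,e(\nu)M=0,$$ where $s_af$ is $f$ with $x_a,x_{a+1}$ interchanged and $\partial_af=(s_af-f)/(x_a-x_{a+1})$.
   Context: Let $I$ be a finite set and $\mathtt A=(a_{ij})_{i,j\in I}$ an integer matrix with $a_{ii}=2$ or $a_{ii}\in 2\mathbb Z_{\le 0}$, $a_{ij}\le 0$ for $i\neq j$, and $a_{ij}=0\iff a_{ji}=0$. Assume there are $d_i\in\mathbb Z_{>0}$ with $(d_ia_{ij})$ symmetric, and fix simple roots $\alpha_i$ with symmetric form $(\alpha_i|\alpha_j)=d_ia_{ij}$. Let $\mathbf k=\bigoplus_{n\ge0}\mathbf k_n$ be a graded commutative ring, $\mathcal Q_{i,j}(u,v)\in\mathbf k[u,v]$ with $\mathcal Q_{i,j}(u,v)=\mathcal Q_{j,i}(v,u)$, $\mathcal Q_{i,i}=0$, and for $i\ne j$, $\mathcal Q_{i,j}=\sum_{d_ip+d_jq\le-(\alpha_i|\alpha_j)}t^{p,q}_{i,j}u^pv^q$ with $t^{-a_{ij},0}_{i,j}\in\mathbf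 k_0^\times$, $t^{p,q}_{i,j}\in\mathbf k_{-2((\alpha_i|\alpha_j)+d_ip+d_jq)}$, $t^{p,q}_{i,j}=t^{q,p}_{j,i}$; $\mathcal P_i(u,v)=\sum_{p+q\le1-a_{ii}/2}w_i^{p,q}u^pv^q$ with $w_i^{1-a_{ii}/2,0},w_i^{0,1-a_{ii}/2}\in\mathbf k_0^\times$, $w_i^{p,q}\in\mathbf k_{2d_i(1-p-q-a_{ii}/2)}$. $R(n)$ is the $\mathbf k$-algebra generated by $e(\nu)$ ($\nu\in I^n$), $x_k$, $\tau_\ell$ with relations: $e(\nu)e(\nu')=\delta_{\nu\nu'}e(\nu)$, $\sum e(\nu)=1$, $x_kx_l=x_lx_k$, $x_ke(\nu)=e(\nu)x_k$, $\tau_\ell e(\nu)=e(s_\ell\nu)\tau_\ell$, $\tau_k\tau_\ell=\tau_\ell\tau_k$ ($|k-\ell|>1$); $\tau_k^2e(\nu)=(\partial_k\mathcal P_{\nu_k}(x_k,x_{k+1}))\tau_ke(\nu)$ if $\nu_k=\nu_{k+1}$, else $\mathcal Q_{\nu_k,\nu_{k+1}}(x_k,x_{k+1})e(\nu)$; $(\tau_kx_\ell-x_{s_k(\ell)}\tau_k)e(\nu)$ is $-\mathcal P_{\nu_k}(x_k,x_{k+1})e(\nu)$ if $\ell=k,\nu_k=\nu_{k+1}$, is $\mathcal P_{\nu_k}(x_k,x_{k+1})e(\nu)$ if $\ell=k+1,\nu_k=\nu_{k+1}$, and $0$ otherwise; $(\tau_{k+1}\tau_k\tau_{k+1}-\tau_k\tau_{k+1}\tau_k)e(\nu)$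 is $\mathcal P_{\nu_k}(x_k,x_{k+2})\overline{\mathcal Q}_{\nu_k,\nu_{k+1}}(x_k,x_{k+1},x_{k+2})e(\nu)$ if $\nu_k=\nu_{k+2}\ne\nu_{k+1}$, is $\overline{\mathcal P}'_{\nu_k}(x_k,x_{k+1},x_{k+2})\tau_ke(\nu)+\overline{\mathcal P}''_{\nu_k}(x_k,x_{k+1},x_{k+2})\tau_{k+1}e(\nu)$ if $\nu_k=\nu_{k+1}=\nu_{k+2}$, and $0$ otherwise; where $s_k=(k,k+1)$ acts on $I^n$ and on polynomials, $\partial_kf=(s_kf-f)/(x_k-x_{k+1})$, $\overline{\mathcal Q}_{i,j}(u,v,w)=\frac{\mathcal Q_{i,j}(u,v)-\mathcal Q_{i,j}(w,v)}{u-w}$, $\overline{\mathcal P}'_i(u,v,w)=\frac{\mathcal P_i(v,u)\mathcal P_i(u,w)}{(u-v)(u-w)}+\frac{\mathcal P_i(u,w)\mathcal P_i(v,w)}{(u-w)(v-w)}-\frac{\mathcal P_i(u,v)\mathcal P_i(v,w)}{(u-v)(v-w)}$, $\overline{\mathcal P}''_i(u,v,w)=-\frac{\mathcal P_i(u,v)\mathcal P_i(u,w)}{(u-v)(u-w)}-\frac{\mathcal P_i(u,w)\mathcal P_i(w,v)}{(u-w)(v-w)}+\frac{\mathcal P_i(u,v)\mathcal P_i(v,w)}{(u-v)(v-w)}$. *)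

theory Defs
  imports Main "HOL.Modules" "HOL-Library.Poly_Mapping"
begin

text \<open>Multivariate polynomials over k in the variables x_i (i :: nat) are
  represented as finitely supported maps from monomials (finitely supported exponent
  vectors) to coefficients.\<close>

type_synonym 'k mpol = "(nat \<Rightarrow>\<^sub>0 nat) \<Rightarrow>\<^sub>0 'k"

definition mconst :: "'k::comm_ring_1 \<Rightarrow> 'k mpol" where
  "mconst c = Poly_Mapping.single 0 c"

definition Xv :: "nat \<Rightarrow> 'k::comm_ring_1 mpol" where
  "Xv i = Poly_Mapping.single (Poly_Mapping.single i 1) 1"

definition rename :: "(nat \<Rightarrow> nat) \<Rightarrow> 'k::comm_ring_1 mpol \<Rightarrow> 'k mpol" where
  "rename sg f = (\<Sum>mo::nat \<Rightarrow>\<^sub>0 nat\<in>Poly_Mapping.keys f. mconst (Poly_Mapping.lookup f mo) * (\<Prod>i\<in>Poly_Mapping.keys mo. Xv (sg i) ^ Poly_Mapping.lookup mo i))"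

definition sidx :: "nat \<Rightarrow> nat \<Rightarrow> nat" where
  "sidx k l = (if l = k then k + 1 else if l = k + 1 then k else l)"

definition spol :: "nat \<Rightarrow> 'k::comm_ring_1 mpol \<Rightarrow> 'k mpol" where
  "spol k f = rename (sidx k) f"

text \<open>Exact division in the polynomial ring (the quotient is unique since the
  divisors used below are non-zero-divisors).\<close>
definition pdiv :: "'k::comm_ring_1 mpol \<Rightarrow> 'k mpol \<Rightarrow> 'k mpol" where
  "pdiv h g = (THE q. g * q = h)"

definition dpol :: "nat \<Rightarrow> 'k::comm_ring_1 mpol \<Rightarrow> 'k mpol" where
  "dpol k f = pdiv (spol k f - f) (Xv k - Xv (k + 1))"

definition bipol :: "(nat \<Rightarrow> nat \<Rightarrow> 'k::comm_ring_1) \<Rightarrow> nat \<Rightarrow> nat \<Rightarrow> 'k mpol" where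
  "bipol c a b = (\<Sum>(p,q)\<in>{(p,q). c p q \<noteq> 0}. mconst (c p q) * Xv a ^ p * Xv b ^ q)"

definition Qbar where
  "Qbar c a b d = pdiv (bipol c a b - bipol c d b) (Xv a - Xv d)"

definition Pp where
  "Pp c u v w = pdiv
     (bipol c v u * bipol c u w * (Xv v - Xv w) + bipol c u w * bipol c v w * (Xv u - Xv v)
      - bipol c u v * bipol c v w * (Xv u - Xv w))
     ((Xv u - Xv v) * (Xv u - Xv w) * (Xv v - Xv w))"

definition Ppp where
  "Ppp c u v w = pdiv
     (- (bipol c u v * bipol c u w * (Xv v - Xv w)) - bipol c u w * bipol c w v * (Xv u - Xv v)
      + bipol c u v * bipol c v w * (Xv u - Xv w))
     ((Xv u - Xv v) * (Xv u - Xv w) * (Xv v - Xv w))"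

definition act :: "('k::comm_ring_1 \<Rightarrow> 'm \<Rightarrow> 'm) \<Rightarrow> (nat \<Rightarrow> 'm \<Rightarrow> 'm) \<Rightarrow> 'k mpol \<Rightarrow> 'm \<Rightarrow> 'm::ab_group_add" where
  "act sc X f m = (\<Sum>mo::nat \<Rightarrow>\<^sub>0 nat\<in>Poly_Mapping.keys f. sc (Poly_Mapping.lookup f mo)
      (foldr (\<lambda>i g. (X i ^^ Poly_Mapping.lookup mo i) \<circ> g) (sorted_list_of_set (Poly_Mapping.keys mo)) id m))"

definition graded :: "(int \<Rightarrow> 'k::comm_ring_1 set) \<Rightarrow> bool" where
  "graded kg \<longleftrightarrow>
     (\<forall>n. 0 \<in> kg n \<and> (\<forall>x\<in>kg n. \<forall>y\<in>kg n. x + y \<in> kg n \<and> - x \<in> kg n)) \<and>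
     (\<forall>n<0. kg n = {0}) \<and> 1 \<in> kg 0 \<and>
     (\<forall>m n. \<forall>x\<in>kg m. \<forall>y\<in>kg n. x * y \<in> kg (m + n)) \<and>
     (\<forall>x. \<exists>!c::int \<Rightarrow> 'k. (\<forall>n. c n \<in> kg n) \<and> finite {n. c n \<noteq> 0} \<and>
            x = (\<Sum>n\<in>{n. c n \<noteq> 0}. c n))"

definition unit0 :: "(int \<Rightarrow> 'k::comm_ring_1 set) \<Rightarrow> 'k \<Rightarrow> bool" where
  "unit0 kg x \<longleftrightarrow> x \<in> kg 0 \<and> (\<exists>y\<in>kg 0. x * y = 1)"

definition cartan :: "('i \<Rightarrow> 'i \<Rightarrow> int) \<Rightarrow> ('i \<Rightarrow> int) \<Rightarrow> bool" where
  "cartan A d \<longleftrightarrow>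
     (\<forall>i. A i i = 2 \<or> (A i i \<le> 0 \<and> even (A i i))) \<and>
     (\<forall>i j. i \<noteq> j \<longrightarrow> A i j \<le> 0) \<and>
     (\<forall>i j. A i j = 0 \<longleftrightarrow> A j i = 0) \<and>
     (\<forall>i. d i > 0) \<and> (\<forall>i j. d i * A i j = d j * A j i)"

text \<open>Conditions on Q_{i,j}(u,v) = \<Sum> t i j p q u^p v^q; (mo_i|mo_j) = d_i a_ij.\<close>
definition Qdata where
  "Qdata kg A d t \<longleftrightarrow>
     (\<forall>i j p q. t i j p q = t j i q p) \<and>
     (\<forall>i p q. t i i p q = 0) \<and>
     (\<forall>i j p q. i \<noteq> j \<longrightarrow> t i j p q \<noteq> 0 \<longrightarrow> d i * int p + d j * int q \<le> - (d i * A i j)) \<and>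
     (\<forall>i j. i \<noteq> j \<longrightarrow> unit0 kg (t i j (nat (- A i j)) 0)) \<and>
     (\<forall>i j p q. i \<noteq> j \<longrightarrow> t i j p q \<in> kg (-2 * (d i * A i j + d i * int p + d j * int q)))"

text \<open>Conditions on P_i(u,v) = \<Sum> w i p q u^p v^q.\<close>
definition Pdata where
  "Pdata kg A d w \<longleftrightarrow>
     (\<forall>i p q. w i p q \<noteq> 0 \<longrightarrow> int p + int q \<le> 1 - A i i div 2) \<and>
     (\<forall>i. unit0 kg (w i (nat (1 - A i i div 2)) 0) \<and> unit0 kg (w i 0 (nat (1 - A i i div 2)))) \<and>
     (\<forall>i p q. w i p q \<in> kg (2 * d i * (1 - int p - int q - A i i div 2)))"

text \<open>s_k acting on sequences \<nu> \<in> I^n (lists, entry \<nu>_k = \<nu> ! (k-1)).\<close>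
definition sseq :: "nat \<Rightarrow> 'i list \<Rightarrow> 'i list" where
  "sseq k nu = nu[k - 1 := nu ! k, k := nu ! (k - 1)]"

abbreviation nth1 :: "'i list \<Rightarrow> nat \<Rightarrow> 'i" where
  "nth1 nu k \<equiv> nu ! (k - 1)"

text \<open>An R(n)-module: a k-module M with k-linear operators E \<nu> = e(\<nu>), X k = x_k,
  T l = \<tau>_l satisfying the defining relations of R(n).\<close>
definition Rmod ::
  "nat \<Rightarrow> ('i::finite \<Rightarrow> nat \<Rightarrow> nat \<Rightarrow> 'k::comm_ring_1) \<Rightarrow> ('i \<Rightarrow> 'i \<Rightarrow> nat \<Rightarrow> nat \<Rightarrow> 'k) \<Rightarrow>
   ('k \<Rightarrow> 'm::ab_group_add \<Rightarrow> 'm) \<Rightarrow> ('i list \<Rightarrow> 'm \<Rightarrow> 'm) \<Rightarrow> (nat \<Rightarrow> 'm \<Rightarrow> 'm) \<Rightarrow> (nat \<Rightarrow> 'm \<Rightarrow> 'm) \<Rightarrow> bool"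
where
  "Rmod n w t sc E X T \<longleftrightarrow>
    module sc \<and>
    (\<forall>nu. length nu = n \<longrightarrow> module_hom sc sc (E nu)) \<and>
    (\<forall>k\<in>{1..n}. module_hom sc sc (X k)) \<and>
    (\<forall>l\<in>{1..<n}. module_hom sc sc (T l)) \<and>
    (\<forall>nu nu' m. length nu = n \<longrightarrow> length nu' = n \<longrightarrow>
        E nu (E nu' m) = (if nu = nu' then E nu m else 0)) \<and>
    (\<forall>m. (\<Sum>nu\<in>{nu. length nu = n}. E nu m) = m) \<and>
    (\<forall>k\<in>{1..n}. \<forall>l\<in>{1..n}. \<forall>m. X k (X l m) = X l (X k m)) \<and>
    (\<forall>k\<in>{1..n}. \<forall>nu m. length nu = n \<longrightarrow> X k (E nu m) = E nu (X k m)) \<and>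
    (\<forall>l\<in>{1..<n}. \<forall>nu m. length nu = n \<longrightarrow> T l (E nu m) = E (sseq l nu) (T l m)) \<and>
    (\<forall>k\<in>{1..<n}. \<forall>l\<in>{1..<n}. \<forall>m. (k + 1 < l \<or> l + 1 < k) \<longrightarrow> T k (T l m) = T l (T k m)) \<and>
    (\<forall>k\<in>{1..<n}. \<forall>nu m. length nu = n \<longrightarrow>
        T k (T k (E nu m)) =
          (if nth1 nu k = nth1 nu (k + 1)
           then act sc X (dpol k (bipol (w (nth1 nu k)) k (k + 1))) (T k (E nu m))
           else act sc X (bipol (t (nth1 nu k) (nth1 nu (k + 1))) k (k + 1)) (E nu m))) \<and>
    (\<forall>k\<in>{1..<n}. \<forall>l\<in>{1..n}. \<forall>nu m. length nu = n \<longrightarrow>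
        T k (X l (E nu m)) - X (sidx k l) (T k (E nu m)) =
          (if l = k \<and> nth1 nu k = nth1 nu (k + 1)
           then - act sc X (bipol (w (nth1 nu k)) k (k + 1)) (E nu m)
           else if l = k + 1 \<and> nth1 nu k = nth1 nu (k + 1)
           then act sc X (bipol (w (nth1 nu k)) k (k + 1)) (E nu m)
           else 0)) \<and>
    (\<forall>k. 1 \<le> k \<longrightarrow> k + 2 \<le> n \<longrightarrow> (\<forall>nu m. length nu = n \<longrightarrow>
        T (k + 1) (T k (T (k + 1) (E nu m))) - T k (T (k + 1) (T k (E nu m))) =
          (if nth1 nu k = nth1 nu (k + 2) \<and> nth1 nu k \<noteq> nth1 nu (k + 1)
           then act sc X (bipol (w (nth1 nu k)) k (k + 2) *
                          Qbar (t (nth1 nu k) (nth1 nu (k + 1))) k (k + 1) (k + 2)) (E nu m)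
           else if nth1 nu k = nth1 nu (k + 1) \<and> nth1 nu k = nth1 nu (k + 2)
           then act sc X (Pp (w (nth1 nu k)) k (k + 1) (k + 2)) (T k (E nu m))
              + act sc X (Ppp (w (nth1 nu k)) k (k + 1) (k + 2)) (T (k + 1) (E nu m))
           else 0)))"

end

theory Submission
  imports Defs
begin

text \<open>Write \<open>\<Delta> = x\<^sub>a - x\<^sub>a\<^sub>+\<^sub>1\<close>, \<open>P = P\<^sub>\<nu>\<^sub>a(x\<^sub>a, x\<^sub>a\<^sub>+\<^sub>1)\<close> and \<open>e = e(\<nu>)\<close>.
  As \<open>\<nu>\<^sub>a = \<nu>\<^sub>a\<^sub>+\<^sub>1\<close>, \<open>\<tau>\<^sub>a\<close> commutes with \<open>e\<close>, and the relations between \<open>\<tau>\<^sub>a\<close> and the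
  \<open>x\<^sub>i\<close> extend, by the twisted Leibniz rule \<open>\<partial>(gh) = s(g) \<partial>h + h \<partial>g\<close>, to
  \<open>\<tau>\<^sub>a g e = s(g) \<tau>\<^sub>a e + \<partial>(g) P e\<close> for every polynomial \<open>g\<close>.
  Applied to \<open>f\<close> on \<open>eM\<close>, using \<open>s f = f + \<Delta> \<partial>f\<close> and \<open>f e M = 0\<close>, this gives
  \<open>\<Delta> \<partial>(f) \<tau>\<^sub>a e + \<partial>(f) P e = 0\<close>; applied on \<open>\<tau>\<^sub>a e M\<close> together with
  \<open>\<tau>\<^sub>a\<^sup>2 e = \<partial>(P) \<tau>\<^sub>a e\<close> and \<open>s P = P + \<Delta> \<partial>P\<close>, it gives \<open>\<partial>(f) s(P) \<tau>\<^sub>a e = 0\<close>.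
  Multiplying the first identity by \<open>s P = P\<^sub>\<nu>\<^sub>a(x\<^sub>a\<^sub>+\<^sub>1, x\<^sub>a)\<close> and using the second yields
  \<open>\<partial>(f) P s(P) e = 0\<close>; the claim for \<open>s f = f + \<Delta> \<partial>f\<close> follows.\<close>

section \<open>Multivariate polynomials\<close>

definition vars :: "'k::comm_ring_1 mpol \<Rightarrow> nat set" where
  "vars p = \<Union> (Poly_Mapping.keys ` Poly_Mapping.keys p)"

lemma poly_mapping_sum_single:
  fixes p :: "'a \<Rightarrow>\<^sub>0 'b::comm_monoid_add"
  shows "p = (\<Sum>mo\<in>Poly_Mapping.keys p. Poly_Mapping.single mo (Poly_Mapping.lookup p mo))"
proof (rule poly_mapping_eqI)
  fix k
  show "Poly_Mapping.lookup p k = Poly_Mapping.lookup (\<Sum>mo\<in>Poly_Mapping.keys p. Poly_Mapping.single mo (Poly_Mapping.lookup p mo)) k"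
    by (auto simp: lookup_sum lookup_single when_def in_keys_iff sum.delta)
qed

lemma mult_as_double_sum:
  fixes p q :: "'k::comm_ring_1 mpol"
  shows "p * q = (\<Sum>m1\<in>Poly_Mapping.keys p. \<Sum>m2\<in>Poly_Mapping.keys q.
    Poly_Mapping.single m1 (Poly_Mapping.lookup p m1) * Poly_Mapping.single m2 (Poly_Mapping.lookup q m2))"
  by (subst poly_mapping_sum_single[of p], subst poly_mapping_sum_single[of q])
    (simp add: sum_distrib_left sum_distrib_right sum.swap[of _ "Poly_Mapping.keys q"])

lemma keys_plus_nat:
  fixes m1 m2 :: "'a \<Rightarrow>\<^sub>0 nat"
  shows "Poly_Mapping.keys (m1 + m2) = Poly_Mapping.keys m1 \<union> Poly_Mapping.keys m2"
  by (auto simp: in_keys_iff lookup_add)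

lemma lookup_single_times:
  fixes q :: "'k::comm_ring_1 mpol"
  shows "Poly_Mapping.lookup (Poly_Mapping.single k c * q) m =
    (\<Sum>mo\<in>Poly_Mapping.keys q. if k + mo = m then c * Poly_Mapping.lookup q mo else 0)"
proof -
  have "Poly_Mapping.single k c * q = (\<Sum>mo\<in>Poly_Mapping.keys q. Poly_Mapping.single k c * Poly_Mapping.single mo (Poly_Mapping.lookup q mo))"
    by (subst poly_mapping_sum_single[of q]) (simp add: sum_distrib_left)
  also have "\<dots> = (\<Sum>mo\<in>Poly_Mapping.keys q. Poly_Mapping.single (k + mo) (c * Poly_Mapping.lookup q mo))"
    by (simp add: mult_single)
  finally show ?thesis
    by (simp add: lookup_sum lookup_single when_def)
qed

text \<open>Compare coefficients at \<open>mo + x\<^sub>a\<close>, where \<open>mo\<close> has maximal \<open>x\<^sub>a\<close>-degree in \<open>q\<close>: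
  only \<open>x\<^sub>a q\<close> contributes there.\<close>
lemma Xv_diff_mult_eq_0_iff:
  fixes q :: "'k::comm_ring_1 mpol"
  assumes ab: "a \<noteq> b"
  shows "(Xv a - Xv b) * q = 0 \<longleftrightarrow> q = 0"
proof
  assume z: "(Xv a - Xv b) * q = 0"
  show "q = 0"
  proof (rule ccontr)
    assume "q \<noteq> 0"
    let ?e = "\<lambda>i. Poly_Mapping.single i (1::nat)"
    define M where "M = Max ((\<lambda>mo. Poly_Mapping.lookup mo a) ` Poly_Mapping.keys q)"
    have "M \<in> (\<lambda>mo. Poly_Mapping.lookup mo a) ` Poly_Mapping.keys q"
      unfolding M_def using \<open>q \<noteq> 0\<close> by (intro Max_in) auto
    then obtain mo where mo: "mo \<in> Poly_Mapping.keys q" "Poly_Mapping.lookup mo a = M" by auto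
    have maxM: "\<And>m'. m' \<in> Poly_Mapping.keys q \<Longrightarrow> Poly_Mapping.lookup m' a \<le> M"
      unfolding M_def by (intro Max_ge) auto
    have a_part: "Poly_Mapping.lookup (Xv a * q) (mo + ?e a) = Poly_Mapping.lookup q mo"
    proof -
      have "Poly_Mapping.lookup (Xv a * q) (mo + ?e a) =
        (\<Sum>m'\<in>Poly_Mapping.keys q. if ?e a + m' = mo + ?e a then 1 * Poly_Mapping.lookup q m' else 0)"
        unfolding Xv_def by (rule lookup_single_times)
      also have "\<dots> = (\<Sum>m'\<in>Poly_Mapping.keys q. if m' = mo then Poly_Mapping.lookup q m' else 0)"
        by (intro sum.cong refl) (metis add.commute add_left_cancel mult_1)
      finally show ?thesis using mo by (simp add: sum.delta)
    qed
    have b_part: "Poly_Mapping.lookup (Xv b * q) (mo + ?e a) = 0"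
    proof -
      have "Poly_Mapping.lookup (Xv b * q) (mo + ?e a) =
        (\<Sum>m'\<in>Poly_Mapping.keys q. if ?e b + m' = mo + ?e a then 1 * Poly_Mapping.lookup q m' else 0)"
        unfolding Xv_def by (rule lookup_single_times)
      also have "\<dots> = 0"
      proof (intro sum.neutral ballI)
        fix m' assume m': "m' \<in> Poly_Mapping.keys q"
        show "(if ?e b + m' = mo + ?e a then 1 * Poly_Mapping.lookup q m' else 0) = 0"
        proof (cases "?e b + m' = mo + ?e a")
          case True
          then have "Poly_Mapping.lookup (?e b + m') a = Poly_Mapping.lookup (mo + ?e a) a" by simp
          then have "Poly_Mapping.lookup m' a = M + 1" using ab mo(2) by (simp add: lookup_add lookup_single)
          with maxM[OF m'] show ?thesis by simp
        qed simp
      qed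
      finally show ?thesis .
    qed
    have "Poly_Mapping.lookup ((Xv a - Xv b) * q) (mo + ?e a) = Poly_Mapping.lookup q mo"
      using a_part b_part by (simp add: left_diff_distrib lookup_minus)
    with z mo(1) show False by (simp add: in_keys_iff)
  qed
qed simp

lemma pdiv_Xv_diff:
  fixes q h :: "'k::comm_ring_1 mpol"
  assumes ab: "a \<noteq> b" and h: "(Xv a - Xv b) * q = h"
  shows "pdiv h (Xv a - Xv b) = q"
  unfolding pdiv_def
proof (rule the_equality)
  fix q' assume "(Xv a - Xv b) * q' = h"
  with h have "(Xv a - Xv b) * (q' - q) = 0" by (simp add: right_diff_distrib)
  with ab show "q' = q" by (simp add: Xv_diff_mult_eq_0_iff)
qed (fact h)

lemma mconst_add: "mconst (a + b) = mconst a + mconst b"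
  by (simp add: mconst_def single_add)

lemma mconst_mult: "mconst (a * b) = mconst a * (mconst b :: 'k::comm_ring_1 mpol)"
  by (simp add: mconst_def mult_single)

lemma mconst_0 [simp]: "mconst 0 = 0"
  by (simp add: mconst_def)

lemma mconst_1 [simp]: "mconst 1 = 1"
  by (simp add: mconst_def)

lemma Xv_power: "(Xv i :: 'k::comm_ring_1 mpol) ^ k = Poly_Mapping.single (Poly_Mapping.single i k) 1"
  by (induct k) (simp_all add: Xv_def mult_single flip: single_add single_one)

lemma prod_single_one: "(\<Prod>i\<in>A. Poly_Mapping.single (f i) (1::'k::comm_ring_1)) = Poly_Mapping.single (\<Sum>i\<in>A. f i) 1"
  by (induct A rule: infinite_finite_induct) (simp_all add: mult_single flip: single_one)

lemma single_one_eq_prod_Xv: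
  "Poly_Mapping.single mo (1::'k::comm_ring_1) = (\<Prod>i\<in>Poly_Mapping.keys mo. Xv i ^ Poly_Mapping.lookup mo i)"
  by (simp add: Xv_power prod_single_one flip: poly_mapping_sum_single)

lemma poly_eq_sum_monomials:
  fixes p :: "'k::comm_ring_1 mpol"
  shows "p = (\<Sum>mo\<in>Poly_Mapping.keys p. mconst (Poly_Mapping.lookup p mo) * (\<Prod>i\<in>Poly_Mapping.keys mo. Xv i ^ Poly_Mapping.lookup mo i))"
  by (subst poly_mapping_sum_single[of p], intro sum.cong refl)
    (simp add: mconst_def mult_single flip: single_one_eq_prod_Xv)

definition rename_monom :: "(nat \<Rightarrow> nat) \<Rightarrow> (nat \<Rightarrow>\<^sub>0 nat) \<Rightarrow> 'k::comm_ring_1 mpol" where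
  "rename_monom sg mo = (\<Prod>i\<in>Poly_Mapping.keys mo. Xv (sg i) ^ Poly_Mapping.lookup mo i)"

lemma rename_eq_sum_rename_monom:
  "rename sg p = (\<Sum>mo\<in>Poly_Mapping.keys p. mconst (Poly_Mapping.lookup p mo) * rename_monom sg mo)"
  by (simp add: rename_def rename_monom_def)

lemma rename_add: "rename sg (p + q) = rename sg p + rename sg q"
  unfolding rename_eq_sum_rename_monom
  by (rule setsum_keys_plus_distrib) (auto simp: mconst_add distrib_right)

lemma rename_0 [simp]: "rename sg 0 = 0"
  by (simp add: rename_def)

lemma rename_sum: "rename sg (sum f A) = (\<Sum>x\<in>A. rename sg (f x))"
  by (induct A rule: infinite_finite_induct) (simp_all add: rename_add)

lemma rename_single: "rename sg (Poly_Mapping.single mo c) = mconst c * rename_monom sg mo"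
  by (simp add: rename_eq_sum_rename_monom)

lemma rename_monom_add:
  "rename_monom sg (m1 + m2) = rename_monom sg m1 * (rename_monom sg m2 :: 'k::comm_ring_1 mpol)"
proof -
  let ?K = "Poly_Mapping.keys m1 \<union> Poly_Mapping.keys m2"
  let ?pow = "\<lambda>m i. (Xv (sg i) :: 'k mpol) ^ Poly_Mapping.lookup m i"
  have restrict: "(\<Prod>i\<in>?K. ?pow m i) = rename_monom sg m" if "Poly_Mapping.keys m \<subseteq> ?K" for m
    unfolding rename_monom_def using that by (intro prod.mono_neutral_right) (auto simp: in_keys_iff)
  have "rename_monom sg (m1 + m2) = (\<Prod>i\<in>?K. ?pow (m1 + m2) i)"
    unfolding rename_monom_def keys_plus_nat ..
  also have "\<dots> = (\<Prod>i\<in>?K. ?pow m1 i) * (\<Prod>i\<in>?K. ?pow m2 i)"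
    by (simp add: lookup_add power_add prod.distrib)
  finally show ?thesis by (simp add: restrict)
qed

lemma rename_mult: "rename sg (p * q) = rename sg p * rename sg (q :: 'k::comm_ring_1 mpol)"
proof -
  let ?s = "\<lambda>p mo. Poly_Mapping.single mo (Poly_Mapping.lookup p mo)"
  have "rename sg (p * q) = (\<Sum>m1\<in>Poly_Mapping.keys p. \<Sum>m2\<in>Poly_Mapping.keys q. rename sg (?s p m1) * rename sg (?s q m2))"
    by (subst mult_as_double_sum)
      (simp add: rename_sum mult_single rename_single rename_monom_add mconst_mult ac_simps)
  also have "\<dots> = rename sg p * rename sg q"
    by (subst (3) poly_mapping_sum_single[of p], subst (3) poly_mapping_sum_single[of q])
      (simp add: rename_sum sum_distrib_left sum_distrib_right sum.swap[of _ "Poly_Mapping.keys q"])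
  finally show ?thesis .
qed

lemma rename_mconst: "rename sg (mconst c) = mconst c"
  by (simp add: mconst_def rename_single rename_monom_def)

lemma rename_Xv: "rename sg (Xv i :: 'k::comm_ring_1 mpol) = Xv (sg i)"
  by (simp add: Xv_def rename_single rename_monom_def flip: mconst_def)

lemma rename_power: "rename sg (p ^ k) = rename sg (p :: 'k::comm_ring_1 mpol) ^ k"
  by (induct k) (simp_all add: rename_mult rename_mconst flip: mconst_1)

lemma rename_bipol: "rename sg (bipol c a b) = bipol c (sg a) (sg b)"
  by (simp add: bipol_def rename_sum case_prod_unfold rename_mult rename_mconst rename_power rename_Xv)

lemma spol_bipol_swap: "spol a (bipol c a (a + 1)) = bipol c (a + 1) a"
  by (simp add: spol_def rename_bipol sidx_def)

lemma vars_add: "vars (p + q) \<subseteq> vars p \<union> vars q"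
  unfolding vars_def using keys_add[of p q] by blast

lemma vars_mult: "vars (p * q) \<subseteq> vars p \<union> vars q"
proof
  fix x assume "x \<in> vars (p * q)"
  then obtain mo where "mo \<in> Poly_Mapping.keys (p * q)" "x \<in> Poly_Mapping.keys mo"
    unfolding vars_def by blast
  with keys_mult[of p q] obtain m1 m2 where
    "m1 \<in> Poly_Mapping.keys p" "m2 \<in> Poly_Mapping.keys q" "x \<in> Poly_Mapping.keys (m1 + m2)"
    by blast
  then show "x \<in> vars p \<union> vars q" unfolding vars_def keys_plus_nat by blast
qed

lemma vars_uminus: "vars (- p) = vars p"
  unfolding vars_def by (simp add: keys_minus)

lemma vars_diff: "vars (p - q) \<subseteq> vars p \<union> vars q"
  by (metis diff_conv_add_uminus vars_add vars_uminus)

lemma vars_mconst: "vars (mconst c) = {}"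
  by (simp add: vars_def mconst_def)

lemma vars_0 [simp]: "vars 0 = {}"
  by (simp add: vars_def)

lemma vars_1 [simp]: "vars 1 = {}"
  by (metis mconst_1 vars_mconst)

lemma vars_Xv: "vars (Xv i) \<subseteq> {i}"
  by (simp add: vars_def Xv_def)

lemma vars_sum: "vars (sum f A) \<subseteq> (\<Union>x\<in>A. vars (f x))"
  by (induct A rule: infinite_finite_induct) (use vars_add in auto)

lemma vars_prod: "vars (prod f A) \<subseteq> (\<Union>x\<in>A. vars (f x))"
  by (induct A rule: infinite_finite_induct) (use vars_mult in auto)

lemma vars_power: "vars (p ^ k) \<subseteq> vars p"
  by (induct k) (use vars_mult in auto)

lemma vars_sub_add: "vars p \<subseteq> S \<Longrightarrow> vars q \<subseteq> S \<Longrightarrow> vars (p + q) \<subseteq> S"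
  using vars_add by blast

lemma vars_sub_mult: "vars p \<subseteq> S \<Longrightarrow> vars q \<subseteq> S \<Longrightarrow> vars (p * q) \<subseteq> S"
  using vars_mult by blast

lemma vars_sub_diff: "vars p \<subseteq> S \<Longrightarrow> vars q \<subseteq> S \<Longrightarrow> vars (p - q) \<subseteq> S"
  using vars_diff by blast

lemma vars_sub_Xv: "i \<in> S \<Longrightarrow> vars (Xv i) \<subseteq> S"
  using vars_Xv by blast

lemma vars_bipol: "vars (bipol c a b) \<subseteq> {a, b}"
proof -
  have "vars (bipol c a b) \<subseteq>
      (\<Union>pq\<in>{(p, q). c p q \<noteq> 0}. vars (case pq of (p, q) \<Rightarrow> mconst (c p q) * Xv a ^ p * Xv b ^ q))"
    unfolding bipol_def by (rule vars_sum)
  also have "\<dots> \<subseteq> {a, b}"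
  proof (intro UN_least)
    fix pq :: "nat \<times> nat"
    obtain p q where pq: "pq = (p, q)" by (cases pq)
    have ap: "vars (Xv a ^ p) \<subseteq> {a, b}" and bq: "vars (Xv b ^ q) \<subseteq> {a, b}"
      using vars_power vars_Xv by (metis insertI1 insert_commute subset_insertI order_trans)+
    show "vars (case pq of (p, q) \<Rightarrow> mconst (c p q) * Xv a ^ p * Xv b ^ q) \<subseteq> {a, b}"
      unfolding pq prod.case by (intro vars_sub_mult ap bq) (simp add: vars_mconst)
  qed
  finally show ?thesis .
qed

lemma vars_rename: "vars (rename sg p) \<subseteq> sg ` vars p"
proof -
  have "vars (rename sg p) \<subseteq> (\<Union>mo\<in>Poly_Mapping.keys p. vars (mconst (Poly_Mapping.lookup p mo) * rename_monom sg mo))"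
    unfolding rename_eq_sum_rename_monom by (rule vars_sum)
  also have "\<dots> \<subseteq> sg ` vars p"
  proof (intro UN_least)
    fix mo assume mo: "mo \<in> Poly_Mapping.keys p"
    have "vars (rename_monom sg mo :: 'a mpol) \<subseteq>
        (\<Union>i\<in>Poly_Mapping.keys mo. vars (Xv (sg i) ^ Poly_Mapping.lookup mo i :: 'a mpol))"
      unfolding rename_monom_def by (rule vars_prod)
    also have "\<dots> \<subseteq> sg ` vars p"
      using mo vars_power vars_Xv unfolding vars_def by fastforce
    finally show "vars (mconst (Poly_Mapping.lookup p mo) * rename_monom sg mo) \<subseteq> sg ` vars p"
      using vars_mult vars_mconst by blast
  qed
  finally show ?thesis .
qed

section \<open>Polynomials acting through commuting module endomorphisms\<close>

definition act_list :: "(nat \<Rightarrow> 'm \<Rightarrow> 'm) \<Rightarrow> nat list \<Rightarrow> (nat \<Rightarrow>\<^sub>0 nat) \<Rightarrow> 'm \<Rightarrow> 'm" where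
  "act_list X L mo = foldr (\<lambda>i g. (X i ^^ Poly_Mapping.lookup mo i) \<circ> g) L id"

definition act_monom :: "(nat \<Rightarrow> 'm \<Rightarrow> 'm) \<Rightarrow> (nat \<Rightarrow>\<^sub>0 nat) \<Rightarrow> 'm \<Rightarrow> 'm" where
  "act_monom X mo = act_list X (sorted_list_of_set (Poly_Mapping.keys mo)) mo"

lemma act_list_Nil [simp]: "act_list X [] mo = id"
  by (simp add: act_list_def)

lemma act_list_Cons [simp]: "act_list X (i # L) mo = (X i ^^ Poly_Mapping.lookup mo i) \<circ> act_list X L mo"
  by (simp add: act_list_def)

lemma act_list_append: "act_list X (L1 @ L2) mo = act_list X L1 mo \<circ> act_list X L2 mo"
  by (induct L1) auto

lemma act_list_filter:
  "Poly_Mapping.keys mo \<subseteq> K \<Longrightarrow> act_list X (filter (\<lambda>i. i \<in> K) L) mo = act_list X L mo"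
proof (induct L)
  case (Cons i L)
  have "i \<notin> K \<Longrightarrow> Poly_Mapping.lookup mo i = 0" using Cons.prems by (auto simp: in_keys_iff)
  then show ?case using Cons by auto
qed simp

lemma act_list_beyond_degree: "set L \<subseteq> {Poly_Mapping.degree mo..} \<Longrightarrow> act_list X L mo = id"
  by (induct L) (auto simp: beyond_degree_lookup_zero)

lemma act_monom_eq_act_list_upt:
  assumes K: "Poly_Mapping.keys mo \<subseteq> K" and N: "Poly_Mapping.degree mo \<le> N"
  shows "act_monom X mo = act_list X (filter (\<lambda>i. i \<in> K) [0..<N]) mo"
proof -
  have "[0..<N] = [0..<Poly_Mapping.degree mo] @ [Poly_Mapping.degree mo..<N]"
    using N by (metis le0 le_add_diff_inverse upt_add_eq_append)
  moreover have "act_list X [Poly_Mapping.degree mo..<N] mo = id"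
    by (rule act_list_beyond_degree) auto
  ultimately have "act_list X [0..<N] mo = act_list X [0..<Poly_Mapping.degree mo] mo"
    by (simp add: act_list_append)
  moreover have "act_monom X mo = act_list X [0..<Poly_Mapping.degree mo] mo"
    unfolding act_monom_def sorted_list_of_set_keys by (rule act_list_filter) simp
  ultimately show ?thesis by (simp add: act_list_filter[OF K])
qed

lemma funpow_commute: "(\<And>m. f (g m) = g (f m)) \<Longrightarrow> f ((g ^^ k) m) = (g ^^ k) (f m)"
  by (induct k) auto

locale commuting_action =
  fixes sc :: "'k::comm_ring_1 \<Rightarrow> 'm::ab_group_add \<Rightarrow> 'm" and X :: "nat \<Rightarrow> 'm \<Rightarrow> 'm" and S :: "nat set"
  assumes module: "module sc"
    and X_hom: "\<And>i. i \<in> S \<Longrightarrow> module_hom sc sc (X i)"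
    and X_commute: "\<And>i j m. i \<in> S \<Longrightarrow> j \<in> S \<Longrightarrow> X i (X j m) = X j (X i m)"
begin

lemma hom_comp: "module_hom sc sc f \<Longrightarrow> module_hom sc sc g \<Longrightarrow> module_hom sc sc (f \<circ> g)"
  by (simp add: module_hom_iff)

lemma hom_id: "module_hom sc sc id"
  using module by (simp add: module_hom_iff)

lemma hom_funpow: "module_hom sc sc f \<Longrightarrow> module_hom sc sc (f ^^ k)"
  by (induct k) (simp_all add: hom_id hom_comp)

lemma hom_sum: "(\<And>x. x \<in> A \<Longrightarrow> module_hom sc sc (f x)) \<Longrightarrow> module_hom sc sc (\<lambda>m. \<Sum>x\<in>A. f x m)"
  using module by (auto simp: module_hom_iff sum.distrib module.scale_sum_right)

lemma act_list_hom: "set L \<subseteq> S \<Longrightarrow> module_hom sc sc (act_list X L mo)"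
  by (induct L) (auto simp: hom_id hom_comp hom_funpow X_hom)

lemma act_list_commute:
  "set L \<subseteq> S \<Longrightarrow> (\<And>i m. i \<in> S \<Longrightarrow> f (X i m) = X i (f m)) \<Longrightarrow> f (act_list X L mo m) = act_list X L mo (f m)"
proof (induct L arbitrary: m)
  case (Cons i L)
  then have "f ((X i ^^ Poly_Mapping.lookup mo i) (act_list X L mo m)) =
      (X i ^^ Poly_Mapping.lookup mo i) (f (act_list X L mo m))"
    by (intro funpow_commute) auto
  with Cons show ?case by simp
qed simp

lemma act_list_add: "set L \<subseteq> S \<Longrightarrow> act_list X L (m1 + m2) = act_list X L m1 \<circ> act_list X L m2"
proof (induct L)
  case (Cons i L)
  have "(X i ^^ Poly_Mapping.lookup m2 i) (act_list X L m1 m) = act_list X L m1 ((X i ^^ Poly_Mapping.lookup m2 i) m)" for m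
    using Cons.prems by (intro act_list_commute) (auto, metis funpow_commute X_commute)
  then show ?case using Cons by (auto simp: lookup_add funpow_add)
qed simp

lemma act_monom_hom: "Poly_Mapping.keys mo \<subseteq> S \<Longrightarrow> module_hom sc sc (act_monom X mo)"
  unfolding act_monom_def by (intro act_list_hom) simp

lemma act_monom_commute:
  "Poly_Mapping.keys mo \<subseteq> S \<Longrightarrow> (\<And>i m. i \<in> S \<Longrightarrow> f (X i m) = X i (f m)) \<Longrightarrow> f (act_monom X mo m) = act_monom X mo (f m)"
  unfolding act_monom_def by (intro act_list_commute) auto

lemma act_monom_add:
  assumes "Poly_Mapping.keys m1 \<subseteq> S" "Poly_Mapping.keys m2 \<subseteq> S"
  shows "act_monom X (m1 + m2) = act_monom X m1 \<circ> act_monom X m2"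
proof -
  let ?K = "Poly_Mapping.keys m1 \<union> Poly_Mapping.keys m2"
  let ?N = "Poly_Mapping.degree m1 + Poly_Mapping.degree m2 + Poly_Mapping.degree (m1 + m2)"
  let ?L = "filter (\<lambda>i. i \<in> ?K) [0..<?N]"
  have "act_monom X (m1 + m2) = act_list X ?L (m1 + m2)"
    by (rule act_monom_eq_act_list_upt) (auto simp: keys_plus_nat)
  also have "\<dots> = act_list X ?L m1 \<circ> act_list X ?L m2"
    using assms by (intro act_list_add) auto
  also have "act_list X ?L m1 = act_monom X m1"
    by (rule act_monom_eq_act_list_upt[symmetric]) auto
  also have "act_list X ?L m2 = act_monom X m2"
    by (rule act_monom_eq_act_list_upt[symmetric]) auto
  finally show ?thesis .
qed

lemma act_eq_sum_act_monom:
  "act sc X p m = (\<Sum>mo\<in>Poly_Mapping.keys p. sc (Poly_Mapping.lookup p mo) (act_monom X mo m))"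
  by (simp add: act_def act_monom_def act_list_def)

lemma act_add: "act sc X (p + q) m = act sc X p m + act sc X q m"
  unfolding act_eq_sum_act_monom
  by (rule setsum_keys_plus_distrib) (auto simp: module.scale_left_distrib[OF module] module.scale_zero_left[OF module])

lemma act_0 [simp]: "act sc X 0 m = 0"
  by (simp add: act_def)

lemma act_uminus: "act sc X (- p) m = - act sc X p m"
  by (metis act_0 act_add add_eq_0_iff)

lemma act_sum: "act sc X (sum f A) m = (\<Sum>x\<in>A. act sc X (f x) m)"
  by (induct A rule: infinite_finite_induct) (simp_all add: act_add)

lemma act_single: "act sc X (Poly_Mapping.single mo c) m = sc c (act_monom X mo m)"
  using module by (simp add: act_eq_sum_act_monom module.scale_zero_left)

lemma act_mconst: "act sc X (mconst c) m = sc c m"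
  by (simp add: mconst_def act_single act_monom_def)

lemma act_Xv: "act sc X (Xv i) m = X i m"
  using module by (simp add: Xv_def act_single act_monom_def module.scale_one)

lemma keys_subset_of_vars: "vars p \<subseteq> S \<Longrightarrow> mo \<in> Poly_Mapping.keys p \<Longrightarrow> Poly_Mapping.keys mo \<subseteq> S"
  unfolding vars_def by blast

lemma act_hom: "vars p \<subseteq> S \<Longrightarrow> module_hom sc sc (act sc X p)"
  unfolding act_eq_sum_act_monom[abs_def]
  using module by (intro hom_sum module_pair.module_hom_scale act_monom_hom keys_subset_of_vars)
    (auto simp: module_pair_def)

lemma act_commute:
  "vars p \<subseteq> S \<Longrightarrow> module_hom sc sc f \<Longrightarrow> (\<And>i m. i \<in> S \<Longrightarrow> f (X i m) = X i (f m)) \<Longrightarrow>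
   f (act sc X p m) = act sc X p (f m)"
  unfolding act_eq_sum_act_monom
  by (simp add: module_hom.sum module_hom.scale act_monom_commute keys_subset_of_vars)

lemma act_single_mult:
  "Poly_Mapping.keys m1 \<subseteq> S \<Longrightarrow> Poly_Mapping.keys m2 \<subseteq> S \<Longrightarrow>
   act sc X (Poly_Mapping.single m1 c1 * Poly_Mapping.single m2 c2) m =
   act sc X (Poly_Mapping.single m1 c1) (act sc X (Poly_Mapping.single m2 c2) m)"
  by (simp add: mult_single act_single act_monom_add module_hom.scale[OF act_monom_hom] module.scale_scale[OF module])

lemma act_mult:
  assumes p: "vars p \<subseteq> S" and q: "vars q \<subseteq> S"
  shows "act sc X (p * q) m = act sc X p (act sc X q m)"
proof -
  let ?s = "\<lambda>p mo. Poly_Mapping.single mo (Poly_Mapping.lookup p mo)"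
  have "act sc X (p * q) m =
      (\<Sum>m1\<in>Poly_Mapping.keys p. \<Sum>m2\<in>Poly_Mapping.keys q. act sc X (?s p m1) (act sc X (?s q m2) m))"
    using p q by (subst mult_as_double_sum) (simp add: act_sum act_single_mult keys_subset_of_vars)
  also have "\<dots> = (\<Sum>m1\<in>Poly_Mapping.keys p. act sc X (?s p m1) (act sc X q m))"
  proof (intro sum.cong refl)
    fix m1 assume m1: "m1 \<in> Poly_Mapping.keys p"
    have "module_hom sc sc (act sc X (?s p m1))"
      by (rule act_hom) (use keys_subset_of_vars[OF p m1] in \<open>auto simp: vars_def\<close>)
    then show "(\<Sum>m2\<in>Poly_Mapping.keys q. act sc X (?s p m1) (act sc X (?s q m2) m)) = act sc X (?s p m1) (act sc X q m)"
      by (subst (2) poly_mapping_sum_single[of q]) (simp add: act_sum module_hom.sum)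
  qed
  also have "\<dots> = act sc X p (act sc X q m)"
    by (subst (3) poly_mapping_sum_single[of p]) (simp add: act_sum)
  finally show ?thesis .
qed

end

section \<open>The twisted Leibniz rule for \<open>\<tau>\<^sub>a\<close> on \<open>e(\<nu>) M\<close>\<close>

text \<open>\<open>E\<close> and \<open>T\<close> play the roles of \<open>e(\<nu>)\<close> and \<open>\<tau>\<^sub>a\<close> for a sequence \<open>\<nu>\<close> with
  \<open>\<nu>\<^sub>a = \<nu>\<^sub>a\<^sub>+\<^sub>1\<close>, and \<open>P\<close> that of \<open>P\<^sub>\<nu>\<^sub>a(x\<^sub>a, x\<^sub>a\<^sub>+\<^sub>1)\<close>.\<close>
locale divided_difference_action = commuting_action sc X S
  for sc :: "'k::comm_ring_1 \<Rightarrow> 'm::ab_group_add \<Rightarrow> 'm" and X S +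
  fixes E T :: "'m \<Rightarrow> 'm" and a :: nat and P :: "'k mpol"
  assumes a_in: "a \<in> S" and Suc_a_in: "a + 1 \<in> S"
    and E_hom: "module_hom sc sc E" and E_idem: "\<And>m. E (E m) = E m"
    and X_E: "\<And>i m. i \<in> S \<Longrightarrow> X i (E m) = E (X i m)"
    and T_hom: "module_hom sc sc T" and T_E: "\<And>m. T (E m) = E (T m)"
    and vars_P: "vars P \<subseteq> S"
    and T_X: "\<And>i m. i \<in> S \<Longrightarrow> T (X i (E m)) - X (sidx a i) (T (E m)) =
        (if i = a then - act sc X P (E m) else if i = a + 1 then act sc X P (E m) else 0)"
begin

abbreviation A where "A p m \<equiv> act sc X p m"

lemma act_E: "vars p \<subseteq> S \<Longrightarrow> A p (E m) = E (A p m)"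
  by (rule act_commute[symmetric]) (auto simp: E_hom X_E)

lemma vars_spol: "vars p \<subseteq> S \<Longrightarrow> vars (spol a p) \<subseteq> S"
  unfolding spol_def using vars_rename[of "sidx a" p] a_in Suc_a_in by (auto simp: sidx_def)

lemma dpol_eqI: "(Xv a - Xv (a + 1)) * q = spol a g - g \<Longrightarrow> dpol a g = q"
  unfolding dpol_def by (rule pdiv_Xv_diff) simp

definition leibniz_rule :: "'k mpol \<Rightarrow> bool" where
  "leibniz_rule g \<longleftrightarrow> vars g \<subseteq> S \<and> vars (dpol a g) \<subseteq> S \<and>
     (Xv a - Xv (a + 1)) * dpol a g = spol a g - g \<and>
     (\<forall>m. T (A g (E m)) = A (spol a g) (T (E m)) + A (dpol a g * P) (E m))"

lemma leibniz_rule_add: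
  assumes g: "leibniz_rule g" and h: "leibniz_rule h"
  shows "leibniz_rule (g + h)"
proof -
  have sp: "spol a (g + h) = spol a g + spol a h"
    by (simp add: spol_def rename_add)
  have dp: "dpol a (g + h) = dpol a g + dpol a h"
    by (rule dpol_eqI) (use g h in \<open>simp add: leibniz_rule_def sp distrib_left\<close>)
  have "T (A (g + h) (E m)) = A (spol a (g + h)) (T (E m)) + A (dpol a (g + h) * P) (E m)" for m
    using g h by (simp add: leibniz_rule_def act_add module_hom.add[OF T_hom] sp dp distrib_right)
  then show ?thesis using g h unfolding leibniz_rule_def
    by (simp add: sp dp vars_sub_add distrib_left)
qed

lemma leibniz_rule_mult:
  assumes g: "leibniz_rule g" and h: "leibniz_rule h"
  shows "leibniz_rule (g * h)"
proof -
  let ?\<Delta> = "Xv a - Xv (a + 1)"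
  have gS: "vars g \<subseteq> S" and hS: "vars h \<subseteq> S" and dgS: "vars (dpol a g) \<subseteq> S" and dhS: "vars (dpol a h) \<subseteq> S"
    and dg: "?\<Delta> * dpol a g = spol a g - g" and dh: "?\<Delta> * dpol a h = spol a h - h"
    and Tg: "\<And>m. T (A g (E m)) = A (spol a g) (T (E m)) + A (dpol a g * P) (E m)"
    and Th: "\<And>m. T (A h (E m)) = A (spol a h) (T (E m)) + A (dpol a h * P) (E m)"
    using g h by (auto simp: leibniz_rule_def)
  have sgS: "vars (spol a g) \<subseteq> S" and shS: "vars (spol a h) \<subseteq> S"
    using gS hS vars_spol by blast+
  have sp: "spol a (g * h) = spol a g * spol a h"
    by (simp add: spol_def rename_mult)
  have dd: "?\<Delta> * (spol a g * dpol a h + h * dpol a g) = spol a (g * h) - g * h"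
  proof -
    have "?\<Delta> * (spol a g * dpol a h + h * dpol a g) = spol a g * (?\<Delta> * dpol a h) + h * (?\<Delta> * dpol a g)"
      by (simp add: algebra_simps)
    also have "\<dots> = spol a g * (spol a h - h) + h * (spol a g - g)"
      by (simp only: dg dh)
    also have "\<dots> = spol a (g * h) - g * h"
      by (simp add: sp algebra_simps)
    finally show ?thesis .
  qed
  have dp: "dpol a (g * h) = spol a g * dpol a h + h * dpol a g"
    by (rule dpol_eqI[OF dd])
  have "T (A (g * h) (E m)) = A (spol a (g * h)) (T (E m)) + A (dpol a (g * h) * P) (E m)" for m
  proof -
    have "T (A (g * h) (E m)) = T (A g (E (A h m)))"
      by (simp add: act_mult gS hS act_E)
    also have "\<dots> = A (spol a g) (T (E (A h m))) + A (dpol a g * P) (E (A h m))"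
      by (rule Tg)
    also have "T (E (A h m)) = A (spol a h) (T (E m)) + A (dpol a h * P) (E m)"
      using Th hS by (simp flip: act_E)
    also have "A (spol a g) (A (spol a h) (T (E m)) + A (dpol a h * P) (E m)) =
        A (spol a g * spol a h) (T (E m)) + A (spol a g * (dpol a h * P)) (E m)"
      by (simp add: module_hom.add[OF act_hom[OF sgS]] act_mult sgS shS dhS vars_P vars_sub_mult)
    also have "A (dpol a g * P) (E (A h m)) = A (dpol a g * P * h) (E m)"
      by (simp add: act_mult dgS vars_P hS vars_sub_mult act_E)
    moreover have "dpol a (g * h) * P = spol a g * (dpol a h * P) + dpol a g * P * h"
      unfolding dp by (simp add: algebra_simps)
    ultimately show ?thesis
      by (simp only: sp act_add add.assoc)
  qed
  moreover have "vars (dpol a (g * h)) \<subseteq> S"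
    unfolding dp using sgS dhS hS dgS by (intro vars_sub_add vars_sub_mult)
  ultimately show ?thesis
    unfolding leibniz_rule_def using gS hS dd dp by (simp add: vars_sub_mult)
qed

lemma leibniz_rule_mconst: "leibniz_rule (mconst c)"
proof -
  have sp: "spol a (mconst c) = mconst c"
    by (simp add: spol_def rename_mconst)
  have dp: "dpol a (mconst c) = 0"
    by (rule dpol_eqI) (simp add: sp)
  show ?thesis unfolding leibniz_rule_def
    by (simp add: sp dp vars_mconst act_mconst module_hom.scale[OF T_hom])
qed

lemma leibniz_rule_Xv:
  assumes i: "i \<in> S"
  shows "leibniz_rule (Xv i)"
proof -
  have sp: "spol a (Xv i) = Xv (sidx a i)"
    by (simp add: spol_def rename_Xv)
  define q where "q = (if i = a then -1 else if i = a + 1 then 1 else (0::'k mpol))"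
  have dd: "(Xv a - Xv (a + 1)) * q = spol a (Xv i) - Xv i"
    by (auto simp: sp q_def sidx_def)
  have dp: "dpol a (Xv i) = q"
    by (rule dpol_eqI[OF dd])
  have "vars q \<subseteq> S"
    by (simp add: q_def vars_uminus vars_mconst flip: mconst_1)
  moreover have "T (A (Xv i) (E m)) = A (spol a (Xv i)) (T (E m)) + A (dpol a (Xv i) * P) (E m)" for m
    using T_X[OF i, of m] by (auto simp: act_Xv sp dp q_def act_uminus algebra_simps)
  ultimately show ?thesis
    unfolding leibniz_rule_def using vars_Xv[of i] i dd by (auto simp: dp)
qed

lemma leibniz_rule_poly:
  assumes "vars p \<subseteq> S"
  shows "leibniz_rule p"
proof -
  have one: "leibniz_rule 1"
    using leibniz_rule_mconst[of 1] by simp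
  have sum: "leibniz_rule (sum f B)" if "\<And>x. x \<in> B \<Longrightarrow> leibniz_rule (f x)" for f :: "_ \<Rightarrow> 'k mpol" and B
    using that by (induct B rule: infinite_finite_induct)
      (auto intro: leibniz_rule_add simp: leibniz_rule_mconst[of 0, simplified])
  have prod: "leibniz_rule (prod f B)" if "\<And>x. x \<in> B \<Longrightarrow> leibniz_rule (f x)" for f :: "_ \<Rightarrow> 'k mpol" and B
    using that by (induct B rule: infinite_finite_induct) (auto intro: leibniz_rule_mult simp: one)
  have power: "leibniz_rule (g ^ k)" if "leibniz_rule g" for g k
    using that by (induct k) (auto intro: leibniz_rule_mult simp: one)
  have "leibniz_rule (\<Sum>mo\<in>Poly_Mapping.keys p. mconst (Poly_Mapping.lookup p mo) * (\<Prod>i\<in>Poly_Mapping.keys mo. Xv i ^ Poly_Mapping.lookup mo i))"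
    using assms by (intro sum leibniz_rule_mult leibniz_rule_mconst prod power leibniz_rule_Xv) (auto simp: vars_def)
  then show ?thesis by (simp flip: poly_eq_sum_monomials)
qed

lemma
  assumes "vars g \<subseteq> S"
  shows vars_dpol: "vars (dpol a g) \<subseteq> S"
    and spol_eq_plus_dpol: "spol a g = g + (Xv a - Xv (a + 1)) * dpol a g"
    and T_act_E: "T (A g (E m)) = A (spol a g) (T (E m)) + A (dpol a g * P) (E m)"
  using leibniz_rule_poly[OF assms] by (simp_all add: leibniz_rule_def)

section \<open>Annihilators of \<open>e(\<nu>) M\<close>\<close>

context
  fixes f :: "'k mpol"
  assumes vars_f: "vars f \<subseteq> S" and f_kills: "\<And>m. A f (E m) = 0"
begin

lemma f_kills_T_E: "A f (T (E m)) = 0"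
  using f_kills[of "T m"] by (simp add: T_E)

lemma dpol_annihilator_T_E:
  "A ((Xv a - Xv (a + 1)) * dpol a f) (T (E m)) + A (dpol a f * P) (E m) = 0"
proof -
  have "0 = T (A f (E m))"
    by (simp add: f_kills module_hom.zero[OF T_hom])
  also have "\<dots> = A (spol a f) (T (E m)) + A (dpol a f * P) (E m)"
    by (rule T_act_E[OF vars_f])
  finally show ?thesis
    by (simp add: spol_eq_plus_dpol[OF vars_f] act_add f_kills_T_E)
qed

lemma dpol_spol_annihilator_T_E:
  assumes T_T: "\<And>m. T (T (E m)) = A (dpol a P) (T (E m))"
  shows "A (dpol a f * spol a P) (T (E m)) = 0"
proof -
  let ?u = "T (E m)"
  have dPS: "vars (dpol a P) \<subseteq> S" and sfS: "vars (spol a f) \<subseteq> S"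
    using vars_dpol[OF vars_P] vars_spol[OF vars_f] .
  have "0 = T (A f (E (T m)))"
    by (simp add: f_kills module_hom.zero[OF T_hom])
  also have "\<dots> = A (spol a f) (T (E (T m))) + A (dpol a f * P) (E (T m))"
    by (rule T_act_E[OF vars_f])
  also have "\<dots> = A (spol a f) (A (dpol a P) ?u) + A (dpol a f * P) ?u"
    by (simp add: T_T flip: T_E)
  also have "\<dots> = A (spol a f * dpol a P + dpol a f * P) ?u"
    by (simp add: act_mult act_add sfS dPS)
  also have "spol a f * dpol a P + dpol a f * P = dpol a P * f + dpol a f * spol a P"
    by (simp add: spol_eq_plus_dpol[OF vars_f] spol_eq_plus_dpol[OF vars_P] algebra_simps)
  also have "A (dpol a P * f + dpol a f * spol a P) ?u = A (dpol a f * spol a P) ?u"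
    by (simp add: act_add act_mult dPS vars_f f_kills_T_E module_hom.zero[OF act_hom[OF dPS]])
  finally show ?thesis by simp
qed

lemma annihilator_dpol_spol:
  assumes T_T: "\<And>m. T (T (E m)) = A (dpol a P) (T (E m))"
  shows "A (dpol a f * P * spol a P) (E m) = 0"
    and "A (spol a f * P * spol a P) (E m) = 0"
proof -
  let ?\<Delta> = "Xv a - Xv (a + 1) :: 'k mpol" and ?u = "T (E m)"
  have \<Delta>S: "vars ?\<Delta> \<subseteq> S"
    using a_in Suc_a_in by (intro vars_sub_diff vars_sub_Xv)
  have DS: "vars (dpol a f) \<subseteq> S" and sPS: "vars (spol a P) \<subseteq> S"
    using vars_dpol[OF vars_f] vars_spol[OF vars_P] .
  have DPS: "vars (dpol a f * P * spol a P) \<subseteq> S"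
    using DS vars_P sPS by (intro vars_sub_mult)
  have \<Delta>DS: "vars (?\<Delta> * dpol a f) \<subseteq> S" and DsPS: "vars (dpol a f * spol a P) \<subseteq> S"
    by (rule vars_sub_mult[OF \<Delta>S DS], rule vars_sub_mult[OF DS sPS])
  have "A (dpol a f * P * spol a P) (E m) = A (spol a P) (A (dpol a f * P) (E m))"
    by (simp add: act_mult[symmetric] DS vars_P sPS vars_sub_mult mult.commute)
  also have "A (dpol a f * P) (E m) = - A (?\<Delta> * dpol a f) ?u"
    using dpol_annihilator_T_E by (simp add: eq_neg_iff_add_eq_0 add.commute)
  also have "A (spol a P) (- A (?\<Delta> * dpol a f) ?u) = - A (spol a P * (?\<Delta> * dpol a f)) ?u"
    using act_mult[OF sPS \<Delta>DS] by (simp add: module_hom.neg[OF act_hom[OF sPS]])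
  also have "spol a P * (?\<Delta> * dpol a f) = ?\<Delta> * (dpol a f * spol a P)"
    by (simp add: ac_simps)
  also have "A (?\<Delta> * (dpol a f * spol a P)) ?u = A ?\<Delta> (A (dpol a f * spol a P) ?u)"
    by (rule act_mult[OF \<Delta>S DsPS])
  finally show dPP: "A (dpol a f * P * spol a P) (E m) = 0"
    using module_hom.zero[OF act_hom[OF \<Delta>S]] by (simp add: dpol_spol_annihilator_T_E[OF T_T])
  have PsPS: "vars (P * spol a P) \<subseteq> S"
    by (rule vars_sub_mult[OF vars_P sPS])
  have "spol a f * P * spol a P = P * spol a P * f + ?\<Delta> * (dpol a f * P * spol a P)"
    by (simp add: spol_eq_plus_dpol[OF vars_f] algebra_simps)
  then have "A (spol a f * P * spol a P) (E m) =
      A (P * spol a P) (A f (E m)) + A ?\<Delta> (A (dpol a f * P * spol a P) (E m))"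
    using act_mult[OF PsPS vars_f] act_mult[OF \<Delta>S DPS] by (simp add: act_add)
  then show "A (spol a f * P * spol a P) (E m) = 0"
    using dPP f_kills module_hom.zero[OF act_hom[OF \<Delta>S]] module_hom.zero[OF act_hom[OF PsPS]]
    by simp
qed

end

end

lemma Rmod_divided_difference_action:
  assumes R: "Rmod n w t sc E X T" and len: "length nu = n" and a: "1 \<le> a" "a < n"
    and eq: "nth1 nu a = nth1 nu (a + 1)"
  shows "divided_difference_action sc X {1..n} (E nu) (T a) a (bipol (w (nth1 nu a)) a (a + 1))"
proof -
  have sseq: "sseq a nu = nu"
    using eq a unfolding sseq_def by (metis Suc_eq_plus1 diff_Suc_1 le_add_diff_inverse2 list_update_id)
  have "module sc"
    and X_hom: "\<forall>k\<in>{1..n}. module_hom sc sc (X k)"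
    and X_commute: "\<forall>k\<in>{1..n}. \<forall>l\<in>{1..n}. \<forall>m. X k (X l m) = X l (X k m)"
    and E_hom: "\<forall>nu. length nu = n \<longrightarrow> module_hom sc sc (E nu)"
    and E_E: "\<forall>nu nu' m. length nu = n \<longrightarrow> length nu' = n \<longrightarrow>
      E nu (E nu' m) = (if nu = nu' then E nu m else 0)"
    and X_E: "\<forall>k\<in>{1..n}. \<forall>nu m. length nu = n \<longrightarrow> X k (E nu m) = E nu (X k m)"
    and T_hom: "\<forall>l\<in>{1..<n}. module_hom sc sc (T l)"
    and T_E: "\<forall>l\<in>{1..<n}. \<forall>nu m. length nu = n \<longrightarrow> T l (E nu m) = E (sseq l nu) (T l m)"
    and T_X: "\<forall>k\<in>{1..<n}. \<forall>l\<in>{1..n}. \<forall>nu m. length nu = n \<longrightarrow>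
      T k (X l (E nu m)) - X (sidx k l) (T k (E nu m)) =
        (if l = k \<and> nth1 nu k = nth1 nu (k + 1)
         then - act sc X (bipol (w (nth1 nu k)) k (k + 1)) (E nu m)
         else if l = k + 1 \<and> nth1 nu k = nth1 nu (k + 1)
         then act sc X (bipol (w (nth1 nu k)) k (k + 1)) (E nu m)
         else 0)"
    using R unfolding Rmod_def by - (elim conjE, assumption)+
  have "commuting_action sc X {1..n}"
    by (rule commuting_action.intro) (use \<open>module sc\<close> X_hom X_commute in auto)
  then show ?thesis
  proof (rule divided_difference_action.intro, intro divided_difference_action_axioms.intro)
    show "vars (bipol (w (nth1 nu a)) a (a + 1)) \<subseteq> {1..n}"
      using vars_bipol[of "w (nth1 nu a)" a "a + 1"] a by auto
    show "T a (X i (E nu m)) - X (sidx a i) (T a (E nu m)) =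
      (if i = a then - act sc X (bipol (w (nth1 nu a)) a (a + 1)) (E nu m)
       else if i = a + 1 then act sc X (bipol (w (nth1 nu a)) a (a + 1)) (E nu m) else 0)"
      if "i \<in> {1..n}" for i m
      using T_X that a len eq by simp
  qed (use a len eq sseq E_hom E_E X_E T_hom T_E in auto)
qed

lemma Rmod_tau_square:
  assumes R: "Rmod n w t sc E X T" and len: "length nu = n" and a: "1 \<le> a" "a < n"
    and eq: "nth1 nu a = nth1 nu (a + 1)"
  shows "T a (T a (E nu m)) = act sc X (dpol a (bipol (w (nth1 nu a)) a (a + 1))) (T a (E nu m))"
proof -
  have "\<forall>k\<in>{1..<n}. \<forall>nu m. length nu = n \<longrightarrow>
      T k (T k (E nu m)) =
        (if nth1 nu k = nth1 nu (k + 1)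
         then act sc X (dpol k (bipol (w (nth1 nu k)) k (k + 1))) (T k (E nu m))
         else act sc X (bipol (t (nth1 nu k) (nth1 nu (k + 1))) k (k + 1)) (E nu m))"
    using R unfolding Rmod_def by (elim conjE) assumption
  with len a eq show ?thesis by simp
qed

theorem lemma4p2:
  fixes A :: "'i::finite \<Rightarrow> 'i \<Rightarrow> int" and d :: "'i \<Rightarrow> int"
    and kg :: "int \<Rightarrow> 'k::comm_ring_1 set"
    and t :: "'i \<Rightarrow> 'i \<Rightarrow> nat \<Rightarrow> nat \<Rightarrow> 'k" and w :: "'i \<Rightarrow> nat \<Rightarrow> nat \<Rightarrow> 'k"
    and sc :: "'k \<Rightarrow> 'm::ab_group_add \<Rightarrow> 'm"
    and E :: "'i list \<Rightarrow> 'm \<Rightarrow> 'm" and X :: "nat \<Rightarrow> 'm \<Rightarrow> 'm" and T :: "nat \<Rightarrow> 'm \<Rightarrow> 'm"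
    and n a :: nat and nu :: "'i list" and f :: "'k mpol"
  assumes "cartan A d" and "graded kg" and "Qdata kg A d t" and "Pdata kg A d w"
    and "n \<ge> 2" and "length nu = n" and "1 \<le> a" and "a < n"
    and "nth1 nu a = nth1 nu (a + 1)"
    and "Rmod n w t sc E X T"
    and "\<forall>\<alpha>\<in>Poly_Mapping.keys f. Poly_Mapping.keys \<alpha> \<subseteq> {1..n}"
    and "\<forall>m. act sc X f (E nu m) = 0"
  shows "(\<forall>m. act sc X (dpol a f * bipol (w (nth1 nu a)) a (a + 1) * bipol (w (nth1 nu a)) (a + 1) a) (E nu m) = 0) \<and>
         (\<forall>m. act sc X (spol a f * bipol (w (nth1 nu a)) a (a + 1) * bipol (w (nth1 nu a)) (a + 1) a) (E nu m) = 0)"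
proof -
  \<comment> \<open>Only the relations of \<open>R(n)\<close> involving \<open>\<tau>\<^sub>a\<close> are used.\<close>
  define P where "P = bipol (w (nth1 nu a)) a (a + 1)"
  interpret divided_difference_action sc X "{1..n}" "E nu" "T a" a P
    unfolding P_def by (rule Rmod_divided_difference_action) fact+
  have vars_f: "vars f \<subseteq> {1..n}"
    using assms(11) unfolding vars_def by blast
  have T_T: "T a (T a (E nu m)) = act sc X (dpol a P) (T a (E nu m))" for m
    unfolding P_def by (rule Rmod_tau_square) fact+
  have "bipol (w (nth1 nu a)) (a + 1) a = spol a P"
    unfolding P_def by (rule spol_bipol_swap[symmetric])
  then show ?thesis
    using annihilator_dpol_spol[OF vars_f _ T_T] assms(12) unfolding P_def by simp
qed

end
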